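(* Let $G\le\mathrm{O}(d)$ be finite and $z_1,\ldots,z_n\in\mathbb{R}^d$. Put $$\alpha(\{z_i\}_{i=1}^n,G):=\inf_{x,y\in\mathcal{O}}\ \max_{f\in\mathcal{F}(x,y)}\Big(\sum_{w\in S(x,y)}\lambda_{\min}\Big(\sum_{i\in f^{-1}(w)}v_i(x)v_i(x)^\top\Big)\Big)^{1/2}.$$ Then the max filter bank $\Phi:\mathbb{R}^d/G\to\mathbb{R}^n$, $\Phi([x])=(\langle\!\langle[z_i],[x]\rangle\!\rangle)_{i=1}^n$, satisfies $$\inf_{\substack{[x],[y]\in\mathbb{R}^d/G\\ [x]\ne[y]}}\frac{\|\Phi([x])-\Phi([y])\|}{d([x],[y])}\ge\alpha(\{z_i\}_{i=1}^n,G).$$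
   Context: For $x\in\mathbb{R}^d$, $[x]:=\{gx:g\in G\}$; $d([x],[y]):=\min_{p\in[x],q\in[y]}\|p-q\|$ and $\langle\!\langle[x],[y]\rangle\!\rangle:=\max_{p\in[x],q\in[y]}\langle p,q\rangle$. The open Voronoi cell $V_x$ is the set of $y$ such that $x$ is the unique maximizer of $\langle p,y\rangle$ over $p\in[x]$; $Q_x:=\bigcup_{p\in[x]}V_p$. $P(G):=\{x:\mathrm{stab}_G(x)=\{\mathrm{id}\}\}$, and $\mathcal{O}:=P(G)\cap\bigcap_{i=1}^nQ_{z_i}$. For $x\in\mathcal{O}$, $v_i(x)$ is the unique element of $\arg\max_{p\in[z_i]}\langle p,x\rangle$. $S(x,y):=\{q\in[y]:V_q\cap V_x\ne\varnothing\}$, and $\mathcal{F}(x,y)$ is the (nonempty) set of functions $f:\{1,\ldots,n\}\to[y]$ with $f(i)\in S(x,y)\cap\arg\max_{q\in[y]}\langle q,v_i(x)\rangle$ for all $i$. An empty sum of matrices is the zero matrix; $\lambda_{\min}$ denotes the smallest eigenvalue. *)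

theory Defs
  imports "HOL-Analysis.Analysis" "HOL-Library.FuncSet"
begin

definition finite_orth_group :: "(real^'n^'n) set \<Rightarrow> bool" where
  "finite_orth_group G \<longleftrightarrow> finite G \<and> mat 1 \<in> G \<and>
     (\<forall>g\<in>G. orthogonal_matrix g) \<and>
     (\<forall>g\<in>G. \<forall>h\<in>G. g ** h \<in> G) \<and> (\<forall>g\<in>G. transpose g \<in> G)"

definition orb :: "(real^'n^'n) set \<Rightarrow> real^'n \<Rightarrow> (real^'n) set" where
  "orb G x = (\<lambda>g. g *v x) ` G"

definition dorb :: "(real^'n^'n) set \<Rightarrow> real^'n \<Rightarrow> real^'n \<Rightarrow> real" where
  "dorb G x y = Min {norm (p - q) | p q. p \<in> orb G x \<and> q \<in> orb G y}"

definition mf :: "(real^'n^'n) set \<Rightarrow> real^'n \<Rightarrow> real^'n \<Rightarrow> real" where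
  "mf G x y = Max {inner p q | p q. p \<in> orb G x \<and> q \<in> orb G y}"

definition vor :: "(real^'n^'n) set \<Rightarrow> real^'n \<Rightarrow> (real^'n) set" where
  "vor G x = {y. \<forall>p\<in>orb G x. p \<noteq> x \<longrightarrow> inner p y < inner x y}"

definition Qset :: "(real^'n^'n) set \<Rightarrow> real^'n \<Rightarrow> (real^'n) set" where
  "Qset G x = (\<Union>p\<in>orb G x. vor G p)"

definition Pset :: "(real^'n^'n) set \<Rightarrow> (real^'n) set" where
  "Pset G = {x. {g\<in>G. g *v x = x} = {mat 1}}"

definition Oset :: "(real^'n^'n) set \<Rightarrow> (nat \<Rightarrow> real^'n) \<Rightarrow> nat \<Rightarrow> (real^'n) set" where
  "Oset G z n = Pset G \<inter> (\<Inter>i\<in>{..<n}. Qset G (z i))"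

definition vv :: "(real^'n^'n) set \<Rightarrow> (nat \<Rightarrow> real^'n) \<Rightarrow> nat \<Rightarrow> real^'n \<Rightarrow> real^'n" where
  "vv G z i x = (THE p. p \<in> orb G (z i) \<and> (\<forall>q\<in>orb G (z i). q \<noteq> p \<longrightarrow> inner q x < inner p x))"

definition Sset :: "(real^'n^'n) set \<Rightarrow> real^'n \<Rightarrow> real^'n \<Rightarrow> (real^'n) set" where
  "Sset G x y = {q \<in> orb G y. vor G q \<inter> vor G x \<noteq> {}}"

definition argmax_orb :: "(real^'n^'n) set \<Rightarrow> real^'n \<Rightarrow> real^'n \<Rightarrow> (real^'n) set" where
  "argmax_orb G y v = {q \<in> orb G y. \<forall>q'\<in>orb G y. inner q' v \<le> inner q v}"

definition Fset :: "(real^'n^'n) set \<Rightarrow> (nat \<Rightarrow> real^'n) \<Rightarrow> nat \<Rightarrow> real^'n \<Rightarrow> real^'n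
    \<Rightarrow> (nat \<Rightarrow> real^'n) set" where
  "Fset G z n x y = (\<Pi>\<^sub>E i\<in>{..<n}. Sset G x y \<inter> argmax_orb G y (vv G z i x))"

definition outer :: "real^'n \<Rightarrow> real^'n^'n" where
  "outer v = (\<chi> i j. v $ i * v $ j)"

definition lambda_min :: "real^'n^'n \<Rightarrow> real" where
  "lambda_min M = Min {l. \<exists>v. v \<noteq> 0 \<and> M *v v = l *\<^sub>R v}"

definition alpha :: "(real^'n^'n) set \<Rightarrow> (nat \<Rightarrow> real^'n) \<Rightarrow> nat \<Rightarrow> real" where
  "alpha G z n = Inf {Max ((\<lambda>f. sqrt (\<Sum>w\<in>Sset G x y.
        lambda_min (\<Sum>i\<in>{i. i < n \<and> f i = w}. outer (vv G z i x)))) ` Fset G z n x y)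
      | x y. x \<in> Oset G z n \<and> y \<in> Oset G z n}"

definition Phi_dist :: "(real^'n^'n) set \<Rightarrow> (nat \<Rightarrow> real^'n) \<Rightarrow> nat \<Rightarrow> real^'n \<Rightarrow> real^'n \<Rightarrow> real" where
  "Phi_dist G z n x y = sqrt (\<Sum>i<n. (mf G (z i) x - mf G (z i) y)\<^sup>2)"

end

theory Submission
  imports Defs
begin

(* For x, y in O and f in F(x,y), the i-th max filter difference is <v_i(x), x - f(i)>:
   the pair (v_i(x), x) attains the max filter at x and (v_i(x), f(i)) attains it at y.
   Grouping the indices i by w = f(i) and bounding each group by the smallest eigenvalue
   lambda_w of its frame operator sum_{f(i) = w} v_i(x) v_i(x)^T gives
     ||Phi(x) - Phi(y)||^2 >= sum_w lambda_w ||x - w||^2 >= (sum_w lambda_w) d([x],[y])^2.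
   Hence the bound holds on O x O.  O contains the complement of finitely many hyperplanes,
   so it is dense, and both sides are continuous, so the bound holds everywhere.
   F(x,y) is nonempty: a generic point close to v_i(x) + e x lies in V_x and in the Voronoi
   cell of a maximizer of <., v_i(x)> over [y]. *)

lemma inner_matrix_vector_transpose: "inner (A *v u) w = inner u (transpose A *v (w::real^'n))"
  by (metis dot_lmul_matrix inner_commute transpose_matrix_vector)

lemma orthogonal_matrix_inner:
  "orthogonal_matrix (g::real^'n^'n) \<Longrightarrow> inner (g *v u) (g *v w) = inner u w"
  by (simp add: inner_matrix_vector_transpose matrix_vector_mul_assoc orthogonal_matrix)

lemma orthogonal_matrix_norm: "orthogonal_matrix (g::real^'n^'n) \<Longrightarrow> norm (g *v u) = norm u"
  by (simp add: norm_eq_sqrt_inner orthogonal_matrix_inner)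

lemma finite_ex_max:
  fixes f :: "'a \<Rightarrow> 'b::linorder"
  assumes "finite S" "S \<noteq> {}"
  obtains p where "p \<in> S" "\<And>q. q \<in> S \<Longrightarrow> f q \<le> f p"
proof -
  have "Max (f ` S) \<in> f ` S" using assms by simp
  then obtain p where p: "p \<in> S" "f p = Max (f ` S)" by auto
  then have "f q \<le> f p" if "q \<in> S" for q
    using assms that by simp
  then show ?thesis using that p(1) by blast
qed

lemma continuous_on_Max_image:
  fixes f :: "'i \<Rightarrow> 'a::topological_space \<Rightarrow> real"
  assumes "finite I" "I \<noteq> {}" "\<And>i. i \<in> I \<Longrightarrow> continuous_on S (f i)"
  shows "continuous_on S (\<lambda>x. Max ((\<lambda>i. f i x) ` I))"
  using assms
proof (induction I rule: finite_ne_induct)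
  case (insert i I)
  then have "(\<lambda>x. Max ((\<lambda>i. f i x) ` insert i I)) = (\<lambda>x. max (f i x) (Max ((\<lambda>i. f i x) ` I)))"
    by (simp add: Max_insert)
  with insert show ?case by (simp add: continuous_on_max)
qed simp

lemma continuous_on_Min_image:
  fixes f :: "'i \<Rightarrow> 'a::topological_space \<Rightarrow> real"
  assumes "finite I" "I \<noteq> {}" "\<And>i. i \<in> I \<Longrightarrow> continuous_on S (f i)"
  shows "continuous_on S (\<lambda>x. Min ((\<lambda>i. f i x) ` I))"
  using assms
proof (induction I rule: finite_ne_induct)
  case (insert i I)
  then have "(\<lambda>x. Min ((\<lambda>i. f i x) ` insert i I)) = (\<lambda>x. min (f i x) (Min ((\<lambda>i. f i x) ` I)))"
    by (simp add: Min_insert)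
  with insert show ?case by (simp add: continuous_on_min)
qed simp

lemma ex_small_perturbation_pos:
  fixes f g :: "'a \<Rightarrow> real"
  assumes "finite F" "\<And>a. a \<in> F \<Longrightarrow> 0 \<le> f a" "\<And>a. a \<in> F \<Longrightarrow> f a = 0 \<Longrightarrow> 0 < g a"
  obtains e where "\<And>a. a \<in> F \<Longrightarrow> 0 < f a + e * g a"
proof -
  have "\<forall>\<^sub>F e in at_right 0. 0 < f a + e * g a" if "a \<in> F" for a
  proof (cases "f a = 0")
    case True
    have "\<forall>\<^sub>F e in at_right (0::real). 0 < e" by (rule eventually_at_right_less)
    then show ?thesis by eventually_elim (simp add: True assms(3)[OF that])
  next
    case False
    then have "0 < f a" using assms(2)[OF that] by simp
    moreover have "((\<lambda>e. f a + e * g a) \<longlongrightarrow> f a) (at_right 0)"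
      by (auto intro!: tendsto_eq_intros)
    ultimately show ?thesis using order_tendstoD(1) by blast
  qed
  then have "\<forall>\<^sub>F e in at_right 0. \<forall>a\<in>F. 0 < f a + e * g a"
    by (simp add: eventually_ball_finite assms(1))
  from eventually_happens[OF this] show ?thesis
    using that trivial_limit_at_right_real by blast
qed


section \<open>Smallest eigenvalue of a symmetric matrix\<close>

definition eigenvalues :: "real^'n^'n \<Rightarrow> real set" where
  "eigenvalues M = {l. \<exists>v. v \<noteq> 0 \<and> M *v v = l *\<^sub>R v}"

lemma symmetric_matrix_inner: "transpose M = M \<Longrightarrow> inner (M *v u) w = inner u (M *v (w::real^'n))"
  using inner_matrix_vector_transpose[of M u w] by simp

lemma finite_eigenvalues_symmetric:
  fixes M :: "real^'n^'n"
  assumes "transpose M = M"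
  shows "finite (eigenvalues M)"
proof -
  define ev where "ev l = (SOME v. v \<noteq> 0 \<and> M *v v = l *\<^sub>R v)" for l
  have ev: "ev l \<noteq> 0 \<and> M *v ev l = l *\<^sub>R ev l" if "l \<in> eigenvalues M" for l
    unfolding ev_def by (rule someI_ex) (use that in \<open>simp add: eigenvalues_def\<close>)
  have inj: "inj_on ev (eigenvalues M)"
  proof (rule inj_onI)
    fix a b assume ab: "a \<in> eigenvalues M" "b \<in> eigenvalues M" "ev a = ev b"
    then have "a *\<^sub>R ev a = b *\<^sub>R ev a" using ev by metis
    then show "a = b" using ev[OF ab(1)] by simp
  qed
  have "pairwise orthogonal (ev ` eigenvalues M)"
  proof (clarsimp simp: pairwise_def orthogonal_def)
    fix a b assume ab: "a \<in> eigenvalues M" "b \<in> eigenvalues M" "ev a \<noteq> ev b"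
    have "a * inner (ev a) (ev b) = inner (M *v ev a) (ev b)" using ev[OF ab(1)] by simp
    also have "\<dots> = inner (ev a) (M *v ev b)" using assms by (rule symmetric_matrix_inner)
    also have "\<dots> = b * inner (ev a) (ev b)" using ev[OF ab(2)] by simp
    finally show "inner (ev a) (ev b) = 0" using ab(3) by auto
  qed
  moreover have "0 \<notin> ev ` eigenvalues M" using ev by auto
  ultimately have "finite (ev ` eigenvalues M)"
    by (intro finiteI_independent pairwise_orthogonal_independent)
  then show ?thesis using inj by (rule finite_imageD)
qed

lemma rayleigh_quotient_attains_min:
  fixes M :: "real^'n^'n"
  obtains u where "norm u = 1" "\<And>d. inner u (M *v u) * (norm d)\<^sup>2 \<le> inner d (M *v d)"
proof -
  define Q where "Q v = inner v (M *v v)" for v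
  have "continuous_on (sphere 0 1) Q"
    unfolding Q_def by (intro continuous_intros linear_continuous_on matrix_vector_mul_bounded_linear)
  moreover have "sphere (0::real^'n) 1 \<noteq> {}"
    using norm_axis_1 by (metis mem_sphere_0 empty_iff)
  ultimately obtain u where u: "norm u = 1" "\<And>v. norm v = 1 \<Longrightarrow> Q u \<le> Q v"
    using continuous_attains_inf[OF compact_sphere] by (metis mem_sphere_0)
  have "Q u * (norm d)\<^sup>2 \<le> Q d" for d
  proof (cases "d = 0")
    case False
    have "Q d = (norm d)\<^sup>2 * Q ((1 / norm d) *\<^sub>R d)"
      using False by (simp add: Q_def matrix_vector_mult_scaleR power2_eq_square)
    moreover have "Q u \<le> Q ((1 / norm d) *\<^sub>R d)" using False by (intro u(2)) simp
    ultimately show ?thesis by (metis mult.commute mult_left_mono zero_le_power2)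
  qed (simp add: Q_def)
  then show ?thesis using that u(1) unfolding Q_def by blast
qed

lemma nonneg_quadratic_imp_linear_coeff_zero:
  fixes b c :: real
  assumes "\<And>t. 0 \<le> t * b + t\<^sup>2 * c" "0 \<le> c"
  shows "b = 0"
proof (rule ccontr)
  assume "b \<noteq> 0"
  define s where "s = b / (c + 1)"
  have "b = s * (c + 1)" using assms(2) by (simp add: s_def)
  then have "- s * b + (- s)\<^sup>2 * c = - s\<^sup>2" by (simp add: power2_eq_square algebra_simps)
  moreover have "s \<noteq> 0" using \<open>b \<noteq> 0\<close> assms(2) by (simp add: s_def)
  ultimately show False using assms(1)[of "- s"] by simp
qed

lemma rayleigh_minimizer_is_eigenvector:
  fixes M :: "real^'n^'n"
  assumes sym: "transpose M = M" and u: "norm u = 1"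
    and min: "\<And>d. inner u (M *v u) * (norm d)\<^sup>2 \<le> inner d (M *v d)"
  shows "M *v u = inner u (M *v u) *\<^sub>R u"
proof -
  define m where "m = inner u (M *v u)"
  define w where "w = M *v u - m *\<^sub>R u"
  have "0 \<le> t * (2 * inner w w) + t\<^sup>2 * (inner w (M *v w) - m * (norm w)\<^sup>2)" for t
  proof -
    have quad: "inner (u + t *\<^sub>R w) (M *v (u + t *\<^sub>R w))
        = m + 2 * t * inner (M *v u) w + t\<^sup>2 * inner w (M *v w)"
      using symmetric_matrix_inner[OF sym, of u w]
      by (simp add: m_def matrix_vector_right_distrib matrix_vector_mult_scaleR inner_add_left
          inner_add_right inner_commute power2_eq_square algebra_simps)
    have "inner u u = 1" using u power2_norm_eq_inner[of u] by simp
    then have norm: "(norm (u + t *\<^sub>R w))\<^sup>2 = 1 + 2 * t * inner u w + t\<^sup>2 * (norm w)\<^sup>2"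
      unfolding power2_norm_eq_inner
      by (simp add: inner_add_left inner_add_right inner_commute power2_eq_square algebra_simps)
    have ww: "inner w w = inner (M *v u) w - m * inner u w"
      unfolding w_def by (simp add: inner_diff_left)
    have "0 \<le> inner (u + t *\<^sub>R w) (M *v (u + t *\<^sub>R w)) - m * (norm (u + t *\<^sub>R w))\<^sup>2"
      using min[of "u + t *\<^sub>R w"] by (simp add: m_def)
    also have "\<dots> = t * (2 * inner w w) + t\<^sup>2 * (inner w (M *v w) - m * (norm w)\<^sup>2)"
      unfolding quad norm ww by (simp add: algebra_simps)
    finally show ?thesis .
  qed
  then have "2 * inner w w = 0"
    by (rule nonneg_quadratic_imp_linear_coeff_zero) (use min in \<open>simp add: m_def\<close>)
  then show ?thesis by (simp add: w_def m_def)
qed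

lemma lambda_min_symmetric:
  fixes M :: "real^'n^'n"
  assumes sym: "transpose M = M"
  shows "lambda_min M \<in> eigenvalues M" and "lambda_min M * (norm d)\<^sup>2 \<le> inner d (M *v d)"
proof -
  obtain u where u: "norm u = 1" and min: "\<And>d. inner u (M *v u) * (norm d)\<^sup>2 \<le> inner d (M *v d)"
    using rayleigh_quotient_attains_min[of M] by blast
  define m where "m = inner u (M *v u)"
  have "M *v u = m *\<^sub>R u"
    unfolding m_def using sym u min by (rule rayleigh_minimizer_is_eigenvector)
  then have m: "m \<in> eigenvalues M"
    unfolding eigenvalues_def using u by (auto intro!: exI[of _ u])
  have "m \<le> l" if l: "l \<in> eigenvalues M" for l
  proof -
    obtain v where v: "v \<noteq> 0" "M *v v = l *\<^sub>R v" using l by (auto simp: eigenvalues_def)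
    then have "m * (norm v)\<^sup>2 \<le> l * (norm v)\<^sup>2"
      using min[of v] by (simp add: m_def power2_norm_eq_inner)
    then show ?thesis using v(1) by simp
  qed
  then have "lambda_min M = m"
    unfolding lambda_min_def eigenvalues_def[symmetric]
    using finite_eigenvalues_symmetric[OF sym] m by (intro Min_eqI) auto
  then show "lambda_min M \<in> eigenvalues M" "lambda_min M * (norm d)\<^sup>2 \<le> inner d (M *v d)"
    using m min by (simp_all add: m_def)
qed

lemma outer_mult_vector: "outer v *v d = inner v d *\<^sub>R v"
  by (simp add: vec_eq_iff outer_def matrix_vector_mult_def inner_vec_def sum_distrib_left
      mult.commute mult.left_commute)

lemma sum_matrix_vector_mult: "sum f I *v (d::real^'n) = (\<Sum>i\<in>I. f i *v d)"
  by (induction I rule: infinite_finite_induct) (simp_all add: matrix_vector_mult_add_rdistrib)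

lemma transpose_sum_outer: "transpose (\<Sum>i\<in>I. outer (v i)) = (\<Sum>i\<in>I. outer (v i :: real^'n))"
  by (simp add: vec_eq_iff transpose_def outer_def mult.commute)

lemma inner_sum_outer: "inner d ((\<Sum>i\<in>I. outer (v i)) *v d) = (\<Sum>i\<in>I. (inner (v i) d)\<^sup>2)"
  by (simp add: sum_matrix_vector_mult outer_mult_vector inner_sum_right power2_eq_square
      inner_commute)

lemma lambda_min_sum_outer_le:
  "lambda_min (\<Sum>i\<in>I. outer (v i)) * (norm d)\<^sup>2 \<le> (\<Sum>i\<in>I. (inner (v i) d)\<^sup>2)"
  using lambda_min_symmetric(2)[OF transpose_sum_outer] by (simp add: inner_sum_outer)

lemma lambda_min_sum_outer_nonneg: "0 \<le> lambda_min (\<Sum>i\<in>I. outer (v i :: real^'n))"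
proof -
  let ?M = "\<Sum>i\<in>I. outer (v i)"
  obtain u where u: "u \<noteq> 0" "?M *v u = lambda_min ?M *\<^sub>R u"
    using lambda_min_symmetric(1)[OF transpose_sum_outer] by (auto simp: eigenvalues_def)
  have "lambda_min ?M * (norm u)\<^sup>2 = (\<Sum>i\<in>I. (inner (v i) u)\<^sup>2)"
    using u(2) inner_sum_outer[of u v I] by (simp add: power2_norm_eq_inner)
  also have "\<dots> \<ge> 0" by (simp add: sum_nonneg)
  finally show ?thesis using u(1) by (simp add: zero_le_mult_iff)
qed


section \<open>Points off finitely many hyperplanes\<close>

lemma interior_Union_hyperplanes:
  fixes A :: "'a::euclidean_space set"
  assumes "finite A" "0 \<notin> A"
  shows "interior (\<Union>a\<in>A. {u. inner a u = 0}) = {}"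
  using assms
proof (induction A rule: finite_induct)
  case (insert a A)
  have "interior ((\<Union>b\<in>A. {u. inner b u = 0}) \<union> {u. inner a u = 0})
      = interior (\<Union>b\<in>A. {u. inner b u = 0})"
    by (rule interior_closed_Un_empty_interior)
      (use insert in \<open>auto intro!: closed_Union closed_hyperplane\<close>)
  with insert show ?case by (simp add: Un_commute)
qed simp

lemma open_avoiding_hyperplanes:
  fixes A :: "'a::euclidean_space set"
  assumes "finite A" "0 \<notin> A" "open U" "U \<noteq> {}"
  obtains u where "u \<in> U" "\<And>a. a \<in> A \<Longrightarrow> inner a u \<noteq> 0"
proof -
  have "\<not> U \<subseteq> (\<Union>a\<in>A. {u. inner a u = 0})"
    using interior_maximal[OF _ assms(3)] interior_Union_hyperplanes[OF assms(1,2)] assms(4)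
    by blast
  then show ?thesis using that by blast
qed

definition difference_set :: "'a::ab_group_add set \<Rightarrow> 'a set" where
  "difference_set S = {p - q | p q. p \<in> S \<and> q \<in> S \<and> p \<noteq> q}"

lemma finite_difference_set: "finite S \<Longrightarrow> finite (difference_set S)"
proof -
  assume "finite S"
  moreover have "difference_set S \<subseteq> (\<lambda>(p, q). p - q) ` (S \<times> S)"
    unfolding difference_set_def by auto
  ultimately show ?thesis by (simp add: finite_subset)
qed

lemma zero_notin_difference_set: "0 \<notin> difference_set S"
  unfolding difference_set_def by auto

lemma inj_on_inner_iff_difference_set:
  "inj_on (\<lambda>p. inner p u) S \<longleftrightarrow> (\<forall>a\<in>difference_set S. inner a u \<noteq> 0)"
  unfolding inj_on_def difference_set_def by (fastforce simp: inner_diff_left)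

lemma ex_separating_point_in_open_cone:
  fixes F :: "'a::euclidean_space set"
  assumes "finite F" "finite S" and nonneg: "\<And>a. a \<in> F \<Longrightarrow> 0 \<le> inner a v"
    and pos: "\<And>a. a \<in> F \<Longrightarrow> inner a v = 0 \<Longrightarrow> 0 < inner a x"
  obtains u where "\<forall>a\<in>F. 0 < inner a u" "inj_on (\<lambda>p. inner p u) S"
proof -
  obtain e where e: "\<And>a. a \<in> F \<Longrightarrow> 0 < inner a v + e * inner a x"
    using ex_small_perturbation_pos[of F "\<lambda>a. inner a v" "\<lambda>a. inner a x"] assms(1) nonneg pos
    by blast
  define U where "U = (\<Inter>a\<in>F. {u. 0 < inner a u})"
  have "v + e *\<^sub>R x \<in> U" unfolding U_def using e by (simp add: inner_add_right)
  moreover have "open U" unfolding U_def using assms(1) by (auto intro: open_halfspace_gt)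
  ultimately obtain u where "u \<in> U" "\<And>a. a \<in> difference_set S \<Longrightarrow> inner a u \<noteq> 0"
    using open_avoiding_hyperplanes[OF finite_difference_set[OF assms(2)]
        zero_notin_difference_set] by blast
  then show ?thesis
    using that unfolding U_def inj_on_inner_iff_difference_set by blast
qed

lemma fixed_vectors_in_hyperplane:
  fixes g :: "real^'n^'n"
  assumes "g \<noteq> mat 1"
  shows "\<exists>a. a \<noteq> 0 \<and> (\<forall>u. g *v u = u \<longrightarrow> inner a u = 0)"
proof -
  obtain j where j: "(g - mat 1) $ j \<noteq> 0" using assms by (auto simp: vec_eq_iff)
  have "inner ((g - mat 1) $ j) u = 0" if "g *v u = u" for u
    using that matrix_vector_mul_component[of "g - mat 1" u j]
    by (simp add: matrix_vector_mult_diff_rdistrib)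
  then show ?thesis using j by blast
qed


section \<open>Orbits of a finite orthogonal group\<close>

locale finite_orthogonal_group =
  fixes G :: "(real^'n^'n) set"
  assumes finite_orth_group: "finite_orth_group G"
begin

lemma finite_G: "finite G"
  and id_in_G: "mat 1 \<in> G"
  and orthogonal_matrix_G: "g \<in> G \<Longrightarrow> orthogonal_matrix g"
  and mult_in_G: "g \<in> G \<Longrightarrow> h \<in> G \<Longrightarrow> g ** h \<in> G"
  and transpose_in_G: "g \<in> G \<Longrightarrow> transpose g \<in> G"
  using finite_orth_group by (auto simp: finite_orth_group_def)

lemma orb_self: "x \<in> orb G x"
  unfolding orb_def using id_in_G by (metis image_eqI matrix_vector_mul_lid)

lemma orb_nonempty: "orb G x \<noteq> {}"
  using orb_self by blast

lemma finite_orb: "finite (orb G x)"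
  unfolding orb_def using finite_G by simp

lemma mult_in_orb: "p \<in> orb G x \<Longrightarrow> g \<in> G \<Longrightarrow> g *v p \<in> orb G x"
  unfolding orb_def using mult_in_G by (auto simp: matrix_vector_mul_assoc)

lemma orb_eq: "p \<in> orb G x \<Longrightarrow> orb G p = orb G x"
proof
  assume p: "p \<in> orb G x"
  show "orb G p \<subseteq> orb G x" using mult_in_orb[OF p] by (auto simp: orb_def)
  from p obtain g where g: "g \<in> G" "p = g *v x" unfolding orb_def by auto
  then have "x = transpose g *v p"
    using orthogonal_matrix_G[OF g(1)] by (simp add: matrix_vector_mul_assoc orthogonal_matrix)
  then show "orb G x \<subseteq> orb G p"
    using mult_in_orb[OF orb_self transpose_in_G[OF g(1)]] mult_in_orb by (auto simp: orb_def)
qed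

lemma norm_orb: "p \<in> orb G x \<Longrightarrow> norm p = norm x"
  unfolding orb_def using orthogonal_matrix_G orthogonal_matrix_norm by auto

lemma inner_orb_lt_self:
  assumes "x' \<in> orb G x" "x' \<noteq> x"
  shows "inner x' x < inner x x"
proof -
  have "inner x' x' = inner x x" using norm_orb[OF assms(1)] by (metis power2_norm_eq_inner)
  moreover have "0 < (norm (x - x'))\<^sup>2" using assms(2) by simp
  ultimately have "0 < 2 * (inner x x - inner x' x)"
    by (simp add: power2_norm_eq_inner inner_diff_left inner_diff_right inner_commute)
  then show ?thesis by simp
qed

lemma setcompr_orb_pairs:
  "{F p q | p q. p \<in> orb G x \<and> q \<in> orb G y} = (\<lambda>gh. F (fst gh *v x) (snd gh *v y)) ` (G \<times> G)"
  unfolding orb_def by force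

lemma finite_setcompr_orb_pairs: "finite {F p q | p q. p \<in> orb G x \<and> q \<in> orb G y}"
  unfolding setcompr_orb_pairs using finite_G by simp

lemma inner_le_mf: "p \<in> orb G z \<Longrightarrow> q \<in> orb G y \<Longrightarrow> inner p q \<le> mf G z y"
  unfolding mf_def by (rule Max_ge[OF finite_setcompr_orb_pairs]) blast

lemma mf_eq_inner:
  assumes p: "p \<in> orb G z" and q: "q \<in> orb G y"
    and max: "\<And>p'. p' \<in> orb G z \<Longrightarrow> inner p' q \<le> inner p q"
  shows "mf G z y = inner p q"
  unfolding mf_def
proof (rule Max_eqI[OF finite_setcompr_orb_pairs])
  fix t assume "t \<in> {inner p q |p q. p \<in> orb G z \<and> q \<in> orb G y}"
  then obtain p' q' where t: "t = inner p' q'" "p' \<in> orb G z" "q' \<in> orb G y" by auto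
  obtain h where h: "h \<in> G" "q' = h *v q" using t(3) orb_eq[OF q] by (auto simp: orb_def)
  have "t = inner (transpose h *v p') q"
    using t(1) h(2) inner_matrix_vector_transpose[of h q p'] by (simp add: inner_commute)
  also have "\<dots> \<le> inner p q" using max mult_in_orb[OF t(2) transpose_in_G[OF h(1)]] .
  finally show "t \<le> inner p q" .
qed (use p q in blast)

lemma mf_commute: "mf G z y = mf G y z"
  unfolding mf_def by (rule arg_cong[where f = Max]) (blast intro: inner_commute)

lemma continuous_on_mf [continuous_intros]:
  "continuous_on S f \<Longrightarrow> continuous_on S (\<lambda>x. mf G z (f x))"
  unfolding mf_def setcompr_orb_pairs
  using finite_G id_in_G
  by (intro continuous_on_Max_image continuous_intros
      bounded_linear.continuous_on[OF matrix_vector_mul_bounded_linear]) auto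

lemma dorb_le: "p \<in> orb G x \<Longrightarrow> q \<in> orb G y \<Longrightarrow> dorb G x y \<le> norm (p - q)"
  unfolding dorb_def by (rule Min_le[OF finite_setcompr_orb_pairs]) blast

lemma dorb_attained: obtains p q where "p \<in> orb G x" "q \<in> orb G y" "dorb G x y = norm (p - q)"
proof -
  have "dorb G x y \<in> {norm (p - q) |p q. p \<in> orb G x \<and> q \<in> orb G y}"
    unfolding dorb_def using orb_self by (intro Min_in finite_setcompr_orb_pairs) blast
  then show ?thesis using that by blast
qed

lemma dorb_nonneg: "0 \<le> dorb G x y"
  by (metis dorb_attained norm_ge_zero)

lemma dorb_pos: "orb G x \<noteq> orb G y \<Longrightarrow> 0 < dorb G x y"
  by (metis dorb_attained orb_eq dorb_nonneg order_neq_le_trans norm_eq_zero right_minus_eq)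

lemma continuous_on_dorb [continuous_intros]:
  "continuous_on S f \<Longrightarrow> continuous_on S g \<Longrightarrow> continuous_on S (\<lambda>x. dorb G (f x) (g x))"
  unfolding dorb_def setcompr_orb_pairs
  using finite_G id_in_G
  by (intro continuous_on_Min_image continuous_intros
      bounded_linear.continuous_on[OF matrix_vector_mul_bounded_linear]) auto


lemma inner_le_of_vor:
  assumes "q \<in> orb G y" "u \<in> vor G q" "q' \<in> orb G y"
  shows "inner q' u \<le> inner q u"
proof (cases "q' = q")
  case False
  have "q' \<in> orb G q" using assms(3) orb_eq[OF assms(1)] by simp
  then have "inner q' u < inner q u" using assms(2) False unfolding vor_def by blast
  then show ?thesis by simp
qed simp

lemma ex_vor_if_inj_on_inner:
  assumes "inj_on (\<lambda>p. inner p u) (orb G y)"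
  obtains q where "q \<in> orb G y" "u \<in> vor G q"
proof -
  obtain q where q: "q \<in> orb G y" "\<And>q'. q' \<in> orb G y \<Longrightarrow> inner q' u \<le> inner q u"
    using finite_ex_max[OF finite_orb orb_nonempty, where f = "\<lambda>q. inner q u"] by blast
  have "inner p u < inner q u" if "p \<in> orb G y" "p \<noteq> q" for p
  proof -
    have "inner p u \<noteq> inner q u" using assms that q(1) unfolding inj_on_def by blast
    with q(2)[OF that(1)] show ?thesis by simp
  qed
  then have "u \<in> vor G q" unfolding vor_def orb_eq[OF q(1)] by blast
  then show ?thesis using that q(1) by blast
qed

lemma vv_in_orb: "x \<in> Qset G (z i) \<Longrightarrow> vv G z i x \<in> orb G (z i)"
  and vv_unique_max: "x \<in> Qset G (z i) \<Longrightarrow> q \<in> orb G (z i) \<Longrightarrow> q \<noteq> vv G z i x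
      \<Longrightarrow> inner q x < inner (vv G z i x) x"
proof -
  assume "x \<in> Qset G (z i)"
  then obtain p where p: "p \<in> orb G (z i)" "x \<in> vor G p" unfolding Qset_def by auto
  let ?P = "\<lambda>p. p \<in> orb G (z i) \<and> (\<forall>q\<in>orb G (z i). q \<noteq> p \<longrightarrow> inner q x < inner p x)"
  have P: "?P p" using p orb_eq[OF p(1)] unfolding vor_def by simp
  have "p' = p" if "?P p'" for p'
  proof (rule ccontr)
    assume "p' \<noteq> p"
    then have "inner p x < inner p' x" "inner p' x < inner p x" using that P by auto
    then show False by simp
  qed
  with P have "?P (vv G z i x)" unfolding vv_def by (rule theI)
  then show "vv G z i x \<in> orb G (z i)"
    and "q \<in> orb G (z i) \<Longrightarrow> q \<noteq> vv G z i x \<Longrightarrow> inner q x < inner (vv G z i x) x"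
    by auto
qed

lemma mf_eq_inner_vv:
  assumes "x \<in> Qset G (z i)"
  shows "mf G (z i) x = inner (vv G z i x) x"
proof (rule mf_eq_inner[OF vv_in_orb[of x z i, OF assms] orb_self])
  fix p' assume "p' \<in> orb G (z i)"
  then show "inner p' x \<le> inner (vv G z i x) x"
    using vv_unique_max[of x z i, OF assms] by (cases "p' = vv G z i x") (auto intro: less_imp_le)
qed

lemma ex_generic_hyperplanes_Oset:
  obtains A where "finite A" "0 \<notin> A" "\<And>u. (\<And>a. a \<in> A \<Longrightarrow> inner a u \<noteq> 0) \<Longrightarrow> u \<in> Oset G z n"
proof -
  have "\<forall>g\<in>G - {mat 1}. \<exists>a. a \<noteq> 0 \<and> (\<forall>u. g *v u = u \<longrightarrow> inner a u = 0)"
    using fixed_vectors_in_hyperplane by blast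
  from bchoice[OF this] obtain a
    where a: "\<forall>g\<in>G - {mat 1}. a g \<noteq> 0 \<and> (\<forall>u. g *v u = u \<longrightarrow> inner (a g) u = 0)" ..
  define A where "A = a ` (G - {mat 1}) \<union> (\<Union>i<n. difference_set (orb G (z i)))"
  have "finite A" unfolding A_def using finite_G finite_orb by (simp add: finite_difference_set)
  moreover have "0 \<notin> A"
  proof -
    have "0 \<notin> a ` (G - {mat 1})" using a by force
    then show ?thesis unfolding A_def using zero_notin_difference_set by blast
  qed
  moreover have "u \<in> Oset G z n" if u: "\<And>a. a \<in> A \<Longrightarrow> inner a u \<noteq> 0" for u
  proof -
    have stab: "g = mat 1" if "g \<in> G" "g *v u = u" for g
    proof (rule ccontr)
      assume "g \<noteq> mat 1"
      then have "g \<in> G - {mat 1}" using \<open>g \<in> G\<close> by blast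
      then have "a g \<in> A" unfolding A_def by blast
      then show False using u a \<open>g \<in> G - {mat 1}\<close> \<open>g *v u = u\<close> by blast
    qed
    have "u \<in> Pset G"
      unfolding Pset_def using stab id_in_G matrix_vector_mul_lid[of u] by blast
    moreover have "u \<in> Qset G (z i)" if "i < n" for i
    proof -
      have "difference_set (orb G (z i)) \<subseteq> A" using that unfolding A_def by blast
      then have "inj_on (\<lambda>p. inner p u) (orb G (z i))"
        unfolding inj_on_inner_iff_difference_set using u by blast
      then obtain q where "q \<in> orb G (z i)" "u \<in> vor G q" by (rule ex_vor_if_inj_on_inner)
      then show ?thesis unfolding Qset_def by blast
    qed
    ultimately show ?thesis unfolding Oset_def by simp
  qed
  ultimately show ?thesis using that by blast
qed

lemma closure_Oset: "closure (Oset G z n) = UNIV"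
proof -
  obtain A where A: "finite A" "0 \<notin> A" "\<And>u. (\<And>a. a \<in> A \<Longrightarrow> inner a u \<noteq> 0) \<Longrightarrow> u \<in> Oset G z n"
    using ex_generic_hyperplanes_Oset[where z = z and n = n] by blast
  have "- Oset G z n \<subseteq> (\<Union>a\<in>A. {u. inner a u = 0})"
    using A(3) by blast
  then have "interior (- Oset G z n) = {}"
    using interior_mono interior_Union_hyperplanes[OF A(1,2)] by blast
  then show ?thesis by (simp add: closure_interior)
qed


lemma Sset_Int_argmax_orb_nonempty:
  assumes x_max: "\<And>x'. x' \<in> orb G x \<Longrightarrow> inner x' v \<le> inner x v"
  shows "Sset G x y \<inter> argmax_orb G y v \<noteq> {}"
proof -
  obtain q0 where q0: "q0 \<in> orb G y" "\<And>q. q \<in> orb G y \<Longrightarrow> inner q v \<le> inner q0 v"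
    using finite_ex_max[OF finite_orb orb_nonempty, where f = "\<lambda>q. inner q v"] by blast
  (* Any u with <a, u> > 0 for all a in F lies in V_x and strictly prefers q0
     to every q in [y] that does not maximize <., v>. *)
  define F where
    "F = (\<lambda>x'. x - x') ` (orb G x - {x}) \<union> (\<lambda>q. q0 - q) ` (orb G y - argmax_orb G y v)"
  have F1: "0 \<le> inner (x - x') v" "0 < inner (x - x') x" if "x' \<in> orb G x" "x' \<noteq> x" for x'
    using x_max[OF that(1)] inner_orb_lt_self[OF that] by (simp_all add: inner_diff_left)
  have F2: "0 < inner (q0 - q) v" if q: "q \<in> orb G y" "q \<notin> argmax_orb G y v" for q
  proof -
    obtain q' where "q' \<in> orb G y" "inner q v < inner q' v"
      using q unfolding argmax_orb_def by (auto simp: not_le)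
    then show ?thesis using q0(2) by (fastforce simp: inner_diff_left)
  qed
  have "finite F" unfolding F_def using finite_orb by simp
  moreover have "0 \<le> inner a v" if "a \<in> F" for a
    using that F1 F2 unfolding F_def by (auto simp: less_imp_le)
  moreover have "0 < inner a x" if "a \<in> F" "inner a v = 0" for a
    using that F1 F2 unfolding F_def by fastforce
  ultimately obtain u where u: "\<forall>a\<in>F. 0 < inner a u" and inj: "inj_on (\<lambda>p. inner p u) (orb G y)"
    by (rule ex_separating_point_in_open_cone[OF _ finite_orb[of y]])
  obtain q where q: "q \<in> orb G y" "u \<in> vor G q" using inj by (rule ex_vor_if_inj_on_inner)
  have "q \<in> argmax_orb G y v"
  proof (rule ccontr)
    assume "q \<notin> argmax_orb G y v"
    then have "0 < inner (q0 - q) u" using q(1) u unfolding F_def by blast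
    then show False using inner_le_of_vor[OF q q0(1)] by (simp add: inner_diff_left)
  qed
  moreover have "inner x' u < inner x u" if "x' \<in> orb G x" "x' \<noteq> x" for x'
  proof -
    have "0 < inner (x - x') u" using that u unfolding F_def by blast
    then show ?thesis by (simp add: inner_diff_left)
  qed
  then have "u \<in> vor G x" unfolding vor_def by blast
  ultimately show ?thesis using q unfolding Sset_def by blast
qed

lemma Fset_nonempty:
  assumes "x \<in> Oset G z n"
  shows "Fset G z n x y \<noteq> {}"
proof -
  have "Sset G x y \<inter> argmax_orb G y (vv G z i x) \<noteq> {}" if "i < n" for i
  proof (rule Sset_Int_argmax_orb_nonempty)
    have Q: "x \<in> Qset G (z i)" using assms that unfolding Oset_def by blast
    fix x' assume "x' \<in> orb G x"
    then have "inner (vv G z i x) x' \<le> mf G (z i) x" by (rule inner_le_mf[OF vv_in_orb[of x z i, OF Q]])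
    then show "inner x' (vv G z i x) \<le> inner x (vv G z i x)"
      by (simp add: mf_eq_inner_vv[of x z i, OF Q] inner_commute)
  qed
  then show ?thesis unfolding Fset_def PiE_eq_empty_iff by blast
qed

lemma finite_Sset: "finite (Sset G x y)"
  unfolding Sset_def using finite_orb by simp

lemma finite_Fset: "finite (Fset G z n x y)"
proof (rule finite_subset)
  show "Fset G z n x y \<subseteq> (\<Pi>\<^sub>E i\<in>{..<n}. orb G y)"
    unfolding Fset_def Sset_def by (intro PiE_mono) auto
qed (intro finite_PiE finite_orb finite_lessThan)


definition fiber_frame_bound :: "(nat \<Rightarrow> real^'n) \<Rightarrow> nat \<Rightarrow> real^'n \<Rightarrow> real^'n
    \<Rightarrow> (nat \<Rightarrow> real^'n) \<Rightarrow> real" where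
  "fiber_frame_bound z n x y f =
     sqrt (\<Sum>w\<in>Sset G x y. lambda_min (\<Sum>i\<in>{i. i < n \<and> f i = w}. outer (vv G z i x)))"

lemma alpha_eq_Inf_fiber_frame_bound:
  "alpha G z n = Inf {Max (fiber_frame_bound z n x y ` Fset G z n x y)
     | x y. x \<in> Oset G z n \<and> y \<in> Oset G z n}"
  by (simp add: alpha_def fiber_frame_bound_def)

lemma fiber_frame_bound_nonneg: "0 \<le> fiber_frame_bound z n x y f"
  unfolding fiber_frame_bound_def by (simp add: sum_nonneg lambda_min_sum_outer_nonneg)

lemma mf_diff_eq_inner:
  assumes "x \<in> Qset G (z i)" "q \<in> argmax_orb G y (vv G z i x)"
  shows "mf G (z i) x - mf G (z i) y = inner (vv G z i x) (x - q)"
proof -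
  have "mf G (z i) y = mf G y (z i)" by (rule mf_commute)
  also have "\<dots> = inner q (vv G z i x)"
    using assms(2) vv_in_orb[of x z i, OF assms(1)] unfolding argmax_orb_def by (intro mf_eq_inner) auto
  finally show ?thesis
    by (simp add: mf_eq_inner_vv[of x z i, OF assms(1)] inner_diff_left inner_commute)
qed

lemma fiber_frame_bound_mult_dorb_le:
  assumes x: "x \<in> Oset G z n" and f: "f \<in> Fset G z n x y"
  shows "fiber_frame_bound z n x y f * dorb G x y \<le> Phi_dist G z n x y"
proof -
  let ?v = "\<lambda>i. vv G z i x"
  let ?S = "Sset G x y"
  let ?fiber = "\<lambda>w. {i. i < n \<and> f i = w}"
  let ?lm = "\<lambda>w. lambda_min (\<Sum>i\<in>?fiber w. outer (?v i))"
  have fi: "f i \<in> ?S" "f i \<in> argmax_orb G y (?v i)" if "i < n" for i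
    using f that unfolding Fset_def by auto
  have "mf G (z i) x - mf G (z i) y = inner (?v i) (x - f i)" if "i < n" for i
    using x that by (intro mf_diff_eq_inner[of x z i] fi(2)) (simp_all add: Oset_def)
  then have "(\<Sum>i<n. (mf G (z i) x - mf G (z i) y)\<^sup>2) = (\<Sum>i<n. (inner (?v i) (x - f i))\<^sup>2)"
    by simp
  also have "\<dots> = (\<Sum>w\<in>?S. \<Sum>i\<in>{i. i \<in> {..<n} \<and> f i = w}. (inner (?v i) (x - f i))\<^sup>2)"
    by (rule sum.group[symmetric]) (use fi(1) finite_Sset in auto)
  also have "\<dots> = (\<Sum>w\<in>?S. \<Sum>i\<in>?fiber w. (inner (?v i) (x - w))\<^sup>2)"
    by (intro sum.cong) auto
  also have "\<dots> \<ge> (\<Sum>w\<in>?S. ?lm w * (dorb G x y)\<^sup>2)"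
  proof (rule sum_mono)
    fix w assume "w \<in> ?S"
    then have "dorb G x y \<le> norm (x - w)" by (intro dorb_le orb_self) (simp add: Sset_def)
    then have "?lm w * (dorb G x y)\<^sup>2 \<le> ?lm w * (norm (x - w))\<^sup>2"
      by (intro mult_left_mono power_mono lambda_min_sum_outer_nonneg dorb_nonneg)
    also have "\<dots> \<le> (\<Sum>i\<in>?fiber w. (inner (?v i) (x - w))\<^sup>2)"
      by (rule lambda_min_sum_outer_le)
    finally show "?lm w * (dorb G x y)\<^sup>2 \<le> (\<Sum>i\<in>?fiber w. (inner (?v i) (x - w))\<^sup>2)" .
  qed
  finally have "sqrt ((\<Sum>w\<in>?S. ?lm w) * (dorb G x y)\<^sup>2) \<le> Phi_dist G z n x y"
    unfolding Phi_dist_def by (simp add: sum_distrib_right)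
  then show ?thesis using dorb_nonneg by (simp add: real_sqrt_mult fiber_frame_bound_def)
qed

lemma alpha_le_Max_fiber_frame_bound:
  assumes "x \<in> Oset G z n" "y \<in> Oset G z n"
  shows "alpha G z n \<le> Max (fiber_frame_bound z n x y ` Fset G z n x y)"
proof -
  have "0 \<le> Max (fiber_frame_bound z n x' y' ` Fset G z n x' y')" if x': "x' \<in> Oset G z n" for x' y'
  proof -
    obtain f where "f \<in> Fset G z n x' y'" using Fset_nonempty[OF x'] by blast
    then have "fiber_frame_bound z n x' y' f \<le> Max (fiber_frame_bound z n x' y' ` Fset G z n x' y')"
      using finite_Fset by (intro Max_ge) auto
    then show ?thesis using fiber_frame_bound_nonneg order_trans by blast
  qed
  then have "bdd_below {Max (fiber_frame_bound z n x y ` Fset G z n x y)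
      | x y. x \<in> Oset G z n \<and> y \<in> Oset G z n}"
    by (fastforce intro: bdd_belowI[of _ 0])
  then show ?thesis unfolding alpha_eq_Inf_fiber_frame_bound using assms by (intro cInf_lower) blast
qed

lemma alpha_mult_dorb_le_on_Oset:
  assumes x: "x \<in> Oset G z n" and y: "y \<in> Oset G z n"
  shows "alpha G z n * dorb G x y \<le> Phi_dist G z n x y"
proof -
  have "Max (fiber_frame_bound z n x y ` Fset G z n x y) \<in> fiber_frame_bound z n x y ` Fset G z n x y"
    using finite_Fset Fset_nonempty[OF x] by (intro Max_in) auto
  then obtain f where f: "f \<in> Fset G z n x y"
    and max: "Max (fiber_frame_bound z n x y ` Fset G z n x y) = fiber_frame_bound z n x y f"
    by auto
  have "alpha G z n * dorb G x y \<le> fiber_frame_bound z n x y f * dorb G x y"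
    using alpha_le_Max_fiber_frame_bound[OF x y] unfolding max by (rule mult_right_mono[OF _ dorb_nonneg])
  also have "\<dots> \<le> Phi_dist G z n x y" by (rule fiber_frame_bound_mult_dorb_le[OF x f])
  finally show ?thesis .
qed

lemma alpha_mult_dorb_le: "alpha G z n * dorb G x y \<le> Phi_dist G z n x y"
proof -
  define h where "h = (\<lambda>(x, y). Phi_dist G z n x y - alpha G z n * dorb G x y)"
  have "continuous_on UNIV h"
    unfolding h_def Phi_dist_def case_prod_beta by (intro continuous_intros)
  moreover have "closure (Oset G z n \<times> Oset G z n) = UNIV"
    by (simp add: closure_Times closure_Oset)
  moreover have "0 \<le> h p" if "p \<in> Oset G z n \<times> Oset G z n" for p
    using that alpha_mult_dorb_le_on_Oset unfolding h_def by auto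
  ultimately have "0 \<le> h (x, y)" by (metis continuous_ge_on_closure UNIV_I)
  then show ?thesis by (simp add: h_def)
qed

end

theorem theorem26:
  fixes G :: "(real^'n^'n) set" and z :: "nat \<Rightarrow> real^'n" and n :: nat
  assumes "finite_orth_group G"
  shows "Inf {Phi_dist G z n x y / dorb G x y | x y. orb G x \<noteq> orb G y} \<ge> alpha G z n"
proof -
  interpret finite_orthogonal_group G by unfold_locales (rule assms)
  have "orb G 0 = {0}" using id_in_G by (auto simp: orb_def)
  then have "(1::real^'n) \<notin> orb G 0" by simp
  then have "orb G 0 \<noteq> orb G 1" using orb_self[of 1] by blast
  then have nonempty: "{Phi_dist G z n x y / dorb G x y | x y. orb G x \<noteq> orb G y} \<noteq> {}" by blast
  show ?thesis
  proof (rule cInf_greatest[OF nonempty])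
    fix t assume "t \<in> {Phi_dist G z n x y / dorb G x y | x y. orb G x \<noteq> orb G y}"
    then obtain x y where "t = Phi_dist G z n x y / dorb G x y" "orb G x \<noteq> orb G y" by blast
    then show "alpha G z n \<le> t" using alpha_mult_dorb_le dorb_pos by (simp add: pos_le_divide_eq)
  qed
qed

end
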